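(* Let $\tau$ be an infinitesimal bending of an isometric immersion $f\colon M^n\to\mathbb{R}^{n+p}$, $p\ge 2$, satisfying condition $( * )$ with unit normal $\eta$ and $\xi\in\Gamma(R)$, and let $\bar L$ be the extended tensor defined below. Then for all $X\in\mathfrak{X}(M)$ and $\lambda\in\Gamma(f_*TM\oplus P)$, $$\langle f_*X+\tilde\nabla_X\lambda,\ LX+\tilde\nabla_X\bar L\lambda\rangle=\langle(\tilde\nabla_X\lambda)_R,\ (\tilde\nabla_X\bar L)\lambda\rangle,$$ where $(\tilde\nabla_X\bar L)\lambda=\tilde\nabla_X\bar L\lambda-\bar L\nabla'_X\lambda$ and $\nabla'$ is the connection induced on $f_*TM\oplus P$ (orthogonal projection of $\tilde\nabla$).
   Context: $\alpha$ is the second fundamental form of $f$, $N_fM$ its normal bundle, $\tilde\nabla$ the Euclidean connection. An infinitesimal bending is a smooth $\tau\colon M\to\mathbb{R}^{n+p}$ with $\langle f_*X,\tilde\nabla_X\tau\rangle=0$ for all tangent $X$. Set $LX=\tilde\nabla_X\tau$, $B(X,Y)=\tilde\nabla_X(LY)-L\nabla_XY$, and $\beta$ the normal component of $B$. Condition $( * )$: there are a unit $\eta\in\Gamma(N_fM)$ and $\xi\in\Gamma(R)$, where $N_fM=P\oplus R$ orthogonally with $P=\mathrm{span}\{\eta\}$, such that $\langle\beta(X,Y),\eta\rangle+\langle\alpha(X,Y),\xi\rangle=0$ for all $X,Y$. The tensor $\bar L\in\Gamma(\mathrm{Hom}(TM\oplus P,f^*T\mathbb{R}^{n+p}))$ is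 given by $\bar L(f_*X)=LX$ for tangent $X$ and $\bar L\eta=f_*Y+\xi$, where $Y\in\mathfrak{X}(M)$ is defined by $\langle Y,X\rangle+\langle LX,\eta\rangle=0$ for all $X$. $(\cdot)_R$ denotes orthogonal projection onto $R$. *)

theory Defs
  imports "HOL-Analysis.Analysis"
begin

text \<open>Local (coordinate) model: M is an open set U of real^'n (a chart), f an immersion
  into real^'m; the Riemannian metric of M is the one induced by f.
  Tangent vectors of M are coordinate vectors in real^'n.\<close>

definition df :: "('a::real_normed_vector \<Rightarrow> 'b::real_normed_vector) \<Rightarrow> 'a \<Rightarrow> 'a \<Rightarrow> 'b" where
  "df g x = frechet_derivative g (at x)"

fun dd :: "('a::real_normed_vector \<Rightarrow> 'b::real_normed_vector) \<Rightarrow> 'a list \<Rightarrow> 'a \<Rightarrow> 'b" where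
  "dd g [] = g"
| "dd g (v # vs) = (\<lambda>x. df (dd g vs) x v)"

definition smooth_on :: "'a::real_normed_vector set \<Rightarrow> ('a \<Rightarrow> 'b::real_normed_vector) \<Rightarrow> bool" where
  "smooth_on U g \<longleftrightarrow> (\<forall>vs. (\<forall>x\<in>U. dd g vs differentiable (at x)) \<and> continuous_on U (dd g vs))"

definition isometric_immersion :: "(real^'n) set \<Rightarrow> (real^'n \<Rightarrow> real^'m) \<Rightarrow> bool" where
  "isometric_immersion U f \<longleftrightarrow> open U \<and> smooth_on U f \<and> (\<forall>x\<in>U. inj (df f x))"

definition vector_field :: "(real^'n) set \<Rightarrow> (real^'n \<Rightarrow> real^'n) \<Rightarrow> bool" where
  "vector_field U X \<longleftrightarrow> smooth_on U X"

definition proj :: "'a::real_inner set \<Rightarrow> 'a \<Rightarrow> 'a" where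
  "proj S u = (THE w. w \<in> S \<and> (\<forall>s\<in>S. inner (u - w) s = 0))"

definition tang :: "(real^'n \<Rightarrow> real^'m) \<Rightarrow> real^'n \<Rightarrow> (real^'m) set" where
  "tang f x = range (df f x)"

definition nor :: "(real^'n \<Rightarrow> real^'m) \<Rightarrow> real^'n \<Rightarrow> (real^'m) set" where
  "nor f x = {w. \<forall>v\<in>tang f x. inner w v = 0}"

text \<open>R = orthogonal complement of P = span eta in the normal space\<close>
definition Rsp :: "(real^'n \<Rightarrow> real^'m) \<Rightarrow> (real^'n \<Rightarrow> real^'m) \<Rightarrow> real^'n \<Rightarrow> (real^'m) set" where
  "Rsp f \<eta> x = {w \<in> nor f x. inner w (\<eta> x) = 0}"

definition TP :: "(real^'n \<Rightarrow> real^'m) \<Rightarrow> (real^'n \<Rightarrow> real^'m) \<Rightarrow> real^'n \<Rightarrow> (real^'m) set" where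
  "TP f \<eta> x = {df f x v + c *\<^sub>R \<eta> x | v c. True}"

definition push :: "(real^'n \<Rightarrow> real^'m) \<Rightarrow> (real^'n \<Rightarrow> real^'n) \<Rightarrow> real^'n \<Rightarrow> real^'m" where
  "push f X x = df f x (X x)"

definition nablat :: "(real^'n \<Rightarrow> real^'n) \<Rightarrow> (real^'n \<Rightarrow> real^'m) \<Rightarrow> real^'n \<Rightarrow> real^'m" where
  "nablat X V x = df V x (X x)"

text \<open>Levi-Civita connection of the induced metric (Gauss formula):
  f_* (nabla_X Y) = tangent part of tilde-nabla_X f_* Y\<close>
definition lc :: "(real^'n \<Rightarrow> real^'m) \<Rightarrow> (real^'n \<Rightarrow> real^'n) \<Rightarrow> (real^'n \<Rightarrow> real^'n) \<Rightarrow> real^'n \<Rightarrow> real^'n" where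
  "lc f X Y x = (THE w. df f x w = proj (tang f x) (nablat X (push f Y) x))"

definition sff :: "(real^'n \<Rightarrow> real^'m) \<Rightarrow> (real^'n \<Rightarrow> real^'n) \<Rightarrow> (real^'n \<Rightarrow> real^'n) \<Rightarrow> real^'n \<Rightarrow> real^'m" where
  "sff f X Y x = proj (nor f x) (nablat X (push f Y) x)"

definition inf_bending :: "(real^'n) set \<Rightarrow> (real^'n \<Rightarrow> real^'m) \<Rightarrow> (real^'n \<Rightarrow> real^'m) \<Rightarrow> bool" where
  "inf_bending U f \<tau> \<longleftrightarrow> smooth_on U \<tau> \<and>
     (\<forall>x\<in>U. \<forall>v. inner (df f x v) (df \<tau> x v) = 0)"

definition Lop :: "(real^'n \<Rightarrow> real^'m) \<Rightarrow> (real^'n \<Rightarrow> real^'n) \<Rightarrow> real^'n \<Rightarrow> real^'m" where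
  "Lop \<tau> X x = nablat X \<tau> x"

definition Bt :: "(real^'n \<Rightarrow> real^'m) \<Rightarrow> (real^'n \<Rightarrow> real^'m) \<Rightarrow> (real^'n \<Rightarrow> real^'n) \<Rightarrow> (real^'n \<Rightarrow> real^'n) \<Rightarrow> real^'n \<Rightarrow> real^'m" where
  "Bt f \<tau> X Y x = nablat X (Lop \<tau> Y) x - Lop \<tau> (lc f X Y) x"

definition beta :: "(real^'n \<Rightarrow> real^'m) \<Rightarrow> (real^'n \<Rightarrow> real^'m) \<Rightarrow> (real^'n \<Rightarrow> real^'n) \<Rightarrow> (real^'n \<Rightarrow> real^'n) \<Rightarrow> real^'n \<Rightarrow> real^'m" where
  "beta f \<tau> X Y x = proj (nor f x) (Bt f \<tau> X Y x)"

definition cond_star :: "(real^'n) set \<Rightarrow> (real^'n \<Rightarrow> real^'m) \<Rightarrow> (real^'n \<Rightarrow> real^'m) \<Rightarrow> (real^'n \<Rightarrow> real^'m) \<Rightarrow> (real^'n \<Rightarrow> real^'m) \<Rightarrow> bool" where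
  "cond_star U f \<tau> \<eta> \<xi> \<longleftrightarrow>
     smooth_on U \<eta> \<and> smooth_on U \<xi> \<and>
     (\<forall>x\<in>U. \<eta> x \<in> nor f x \<and> norm (\<eta> x) = 1 \<and> \<xi> x \<in> Rsp f \<eta> x) \<and>
     (\<forall>X Y. vector_field U X \<longrightarrow> vector_field U Y \<longrightarrow>
        (\<forall>x\<in>U. inner (beta f \<tau> X Y x) (\<eta> x) + inner (sff f X Y x) (\<xi> x) = 0))"

definition Yfld :: "(real^'n \<Rightarrow> real^'m) \<Rightarrow> (real^'n \<Rightarrow> real^'m) \<Rightarrow> (real^'n \<Rightarrow> real^'m) \<Rightarrow> real^'n \<Rightarrow> real^'n" where
  "Yfld f \<tau> \<eta> x = (THE y. \<forall>v. inner (df f x y) (df f x v) + inner (df \<tau> x v) (\<eta> x) = 0)"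

text \<open>extended tensor Lbar at x applied to u in f_*T_xM + P_x:
  Lbar(f_* v) = L v, Lbar eta = f_* Y + xi\<close>
definition Lbar :: "(real^'n \<Rightarrow> real^'m) \<Rightarrow> (real^'n \<Rightarrow> real^'m) \<Rightarrow> (real^'n \<Rightarrow> real^'m) \<Rightarrow> (real^'n \<Rightarrow> real^'m) \<Rightarrow> real^'n \<Rightarrow> real^'m \<Rightarrow> real^'m" where
  "Lbar f \<tau> \<eta> \<xi> x u =
     df \<tau> x (THE v. df f x v = proj (tang f x) u)
     + inner u (\<eta> x) *\<^sub>R (df f x (Yfld f \<tau> \<eta> x) + \<xi> x)"

end

theory Submission
  imports Defs
begin

text \<open>
  Write \<open>\<mu>\<close> for the Euclidean derivative of the section \<open>\<lambda>\<close> in direction \<open>X\<close>, split as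
  \<open>\<mu> = \<mu>' + r\<close> with \<open>\<mu>'\<close> in \<open>f\<^sub>*TM \<oplus> P\<close> and \<open>r\<close> in \<open>R\<close>, and let \<open>D = (\<nabla>\<^sub>X Lbar) \<lambda>\<close>.
  With \<open>w = f\<^sub>*X + \<mu>'\<close> the two factors on the left are \<open>w + r\<close> and \<open>Lbar w + D\<close>. Since \<open>Lbar\<close> is skew
  on \<open>f\<^sub>*TM \<oplus> P\<close> (by the bending condition and the choice of \<open>Y\<close>), the claim reduces to
  \<open>\<langle>u, D\<rangle> + \<langle>r, Lbar u\<rangle> = 0\<close> for all \<open>u\<close> in \<open>f\<^sub>*TM \<oplus> P\<close>. Both \<open>D\<close> and \<open>r\<close> are tensorial in \<open>\<lambda>\<close>,
  so \<open>\<lambda> = f\<^sub>* a + t \<eta>\<close> with constant coefficients suffices. For \<open>u = f\<^sub>* b\<close> one differentiates the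
  bending condition and the equation defining \<open>Y\<close>, for \<open>u = \<eta>\<close> the orthonormality relations of \<open>\<eta>\<close>
  and \<open>\<xi>\<close>; in both cases the remaining terms cancel by condition (*).
\<close>

section \<open>Iterated directional derivatives\<close>

lemma dd_append: "dd (dd g vs) ws = dd g (ws @ vs)"
  by (induction ws) auto

lemma smooth_on_dd: "smooth_on U g \<Longrightarrow> smooth_on U (dd g vs)"
  unfolding smooth_on_def by (simp add: dd_append)

lemma smooth_on_has_derivative_dd:
  assumes "smooth_on U g" "x \<in> U"
  shows "(dd g vs has_derivative df (dd g vs) x) (at x)"
  using assms unfolding smooth_on_def df_def by (simp add: frechet_derivative_works)

lemma smooth_on_has_derivative:
  assumes "smooth_on U g" "x \<in> U"
  shows "(g has_derivative df g x) (at x)"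
  using smooth_on_has_derivative_dd[OF assms, of "[]"] by simp

lemma smooth_on_linear_df: "smooth_on U g \<Longrightarrow> x \<in> U \<Longrightarrow> linear (df g x)"
  using smooth_on_has_derivative has_derivative_linear by blast

lemma dd_const: "dd (\<lambda>_. c) vs = (\<lambda>_. if vs = [] then c else 0)"
  by (induction vs) (auto simp: df_def)

lemma smooth_on_const: "smooth_on U (\<lambda>_. c)"
  unfolding smooth_on_def dd_const by auto

lemma has_derivative_locally_constant:
  assumes "open U" "x \<in> U" "\<And>z. z \<in> U \<Longrightarrow> \<phi> z = k" "(\<phi> has_derivative \<phi>') (at x)"
  shows "\<phi>' h = 0"
proof -
  have "(\<phi> has_derivative (\<lambda>_. 0)) (at x)"
    by (rule has_derivative_transform_within_open[OF has_derivative_const assms(1,2)]) (simp add: assms(3))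
  then show ?thesis using assms(4) has_derivative_unique by metis
qed

lemma inner_derivative_of_constant:
  assumes "open U" "x \<in> U" "\<And>z. z \<in> U \<Longrightarrow> inner (g z) (h z) = k"
    and "(g has_derivative g') (at x)" "(h has_derivative h') (at x)"
  shows "inner (g x) (h' v) + inner (g' v) (h x) = 0"
  using has_derivative_locally_constant[OF assms(1-3) has_derivative_inner[OF assms(4,5)]] .

lemma has_real_derivative_inner_along_line:
  fixes g :: "'a::real_normed_vector \<Rightarrow> 'b::real_inner"
  assumes "(g has_derivative g') (at (a + s *\<^sub>R p))"
  shows "((\<lambda>s. inner w (g (a + s *\<^sub>R p))) has_real_derivative inner w (g' p)) (at s)"
proof -
  have "((\<lambda>s. a + s *\<^sub>R p) has_derivative (\<lambda>h. h *\<^sub>R p)) (at s)"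
    by (auto intro!: derivative_eq_intros)
  from has_derivative_inner_right[OF has_derivative_compose[OF this assms]]
  have "((\<lambda>s. inner w (g (a + s *\<^sub>R p))) has_derivative (\<lambda>h. inner w (g' (h *\<^sub>R p)))) (at s)" .
  moreover have "(\<lambda>h. inner w (g' (h *\<^sub>R p))) = (*) (inner w (g' p))"
    using assms has_derivative_linear by (fastforce simp: linear_scale mult.commute)
  ultimately show ?thesis by (simp add: has_field_derivative_def)
qed

lemma mixed_difference_mean_value:
  fixes g :: "'a::real_normed_vector \<Rightarrow> 'b::real_inner"
  assumes g: "smooth_on U g"
    and sub: "\<And>\<sigma> \<tau>. 0 \<le> \<sigma> \<Longrightarrow> \<sigma> \<le> s \<Longrightarrow> 0 \<le> \<tau> \<Longrightarrow> \<tau> \<le> t \<Longrightarrow> x + \<sigma> *\<^sub>R p + \<tau> *\<^sub>R q \<in> U"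
    and "0 < s" "0 < t"
  shows "\<exists>\<sigma> \<tau>. 0 < \<sigma> \<and> \<sigma> < s \<and> 0 < \<tau> \<and> \<tau> < t \<and>
     inner w (g (x + s *\<^sub>R p + t *\<^sub>R q) - g (x + s *\<^sub>R p) - g (x + t *\<^sub>R q) + g x)
       = s * t * inner w (dd g [q,p] (x + \<sigma> *\<^sub>R p + \<tau> *\<^sub>R q))"
proof -
  define \<phi> where "\<phi> \<sigma> = inner w (g ((x + t *\<^sub>R q) + \<sigma> *\<^sub>R p)) - inner w (g (x + \<sigma> *\<^sub>R p))" for \<sigma>
  have "\<exists>\<sigma>. 0 < \<sigma> \<and> \<sigma> < s \<and> \<phi> s - \<phi> 0 = (s - 0) *
      (inner w (dd g [p] ((x + t *\<^sub>R q) + \<sigma> *\<^sub>R p)) - inner w (dd g [p] (x + \<sigma> *\<^sub>R p)))"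
  proof (rule MVT2[OF \<open>0 < s\<close>])
    fix \<sigma> assume "0 \<le> \<sigma>" "\<sigma> \<le> s"
    then have "(x + t *\<^sub>R q) + \<sigma> *\<^sub>R p \<in> U" "x + \<sigma> *\<^sub>R p \<in> U"
      using sub[of \<sigma> t] sub[of \<sigma> 0] \<open>0 < t\<close> by (simp_all add: algebra_simps)
    then show "(\<phi> has_real_derivative inner w (dd g [p] ((x + t *\<^sub>R q) + \<sigma> *\<^sub>R p))
        - inner w (dd g [p] (x + \<sigma> *\<^sub>R p))) (at \<sigma>)"
      unfolding \<phi>_def
      using DERIV_diff[OF has_real_derivative_inner_along_line has_real_derivative_inner_along_line,
          OF smooth_on_has_derivative[OF g] smooth_on_has_derivative[OF g]]
      by simp
  qed
  then obtain \<sigma> where \<sigma>: "0 < \<sigma>" "\<sigma> < s" and e1: "\<phi> s - \<phi> 0 = s *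
      (inner w (dd g [p] ((x + t *\<^sub>R q) + \<sigma> *\<^sub>R p)) - inner w (dd g [p] (x + \<sigma> *\<^sub>R p)))" by auto
  define \<psi> where "\<psi> \<tau> = inner w (dd g [p] ((x + \<sigma> *\<^sub>R p) + \<tau> *\<^sub>R q))" for \<tau>
  have "\<exists>\<tau>. 0 < \<tau> \<and> \<tau> < t \<and> \<psi> t - \<psi> 0 = (t - 0) * inner w (dd g [q,p] ((x + \<sigma> *\<^sub>R p) + \<tau> *\<^sub>R q))"
  proof (rule MVT2[OF \<open>0 < t\<close>])
    fix \<tau> assume "0 \<le> \<tau>" "\<tau> \<le> t"
    then have "(x + \<sigma> *\<^sub>R p) + \<tau> *\<^sub>R q \<in> U" using sub[of \<sigma> \<tau>] \<sigma> by simp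
    then show "(\<psi> has_real_derivative inner w (dd g [q,p] ((x + \<sigma> *\<^sub>R p) + \<tau> *\<^sub>R q))) (at \<tau>)"
      unfolding \<psi>_def
      using has_real_derivative_inner_along_line[OF smooth_on_has_derivative_dd[OF g, of _ "[p]"]] by simp
  qed
  then obtain \<tau> where \<tau>: "0 < \<tau>" "\<tau> < t"
    and e2: "\<psi> t - \<psi> 0 = t * inner w (dd g [q,p] ((x + \<sigma> *\<^sub>R p) + \<tau> *\<^sub>R q))" by auto
  have "inner w (g (x + s *\<^sub>R p + t *\<^sub>R q) - g (x + s *\<^sub>R p) - g (x + t *\<^sub>R q) + g x) = \<phi> s - \<phi> 0"
    unfolding \<phi>_def by (simp add: inner_diff_right inner_add_right algebra_simps)
  also have "\<dots> = s * (\<psi> t - \<psi> 0)" unfolding e1 \<psi>_def by (simp add: algebra_simps)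
  also have "\<dots> = s * t * inner w (dd g [q,p] (x + \<sigma> *\<^sub>R p + \<tau> *\<^sub>R q))" using e2 by simp
  finally show ?thesis using \<sigma> \<tau> by blast
qed

lemma mixed_derivatives_meet_in_ball:
  fixes g :: "'a::real_normed_vector \<Rightarrow> 'b::real_inner"
  assumes g: "smooth_on U g" and "0 < d" and ball: "ball x d \<subseteq> U"
  shows "\<exists>y\<in>ball x d. \<exists>z\<in>ball x d. inner w (dd g [q,p] y) = inner w (dd g [p,q] z)"
proof -
  define m where "m = norm p + norm q + 1"
  define s where "s = d / (2 * m)"
  have "0 < m" unfolding m_def using norm_ge_zero[of p] norm_ge_zero[of q] by linarith
  then have "0 < s" using \<open>0 < d\<close> unfolding s_def by simp
  have "s * (norm p + norm q) \<le> s * m" using \<open>0 < s\<close> unfolding m_def by simp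
  also have "\<dots> < d" unfolding s_def using \<open>0 < m\<close> \<open>0 < d\<close> by simp
  finally have "s * (norm p + norm q) < d" .
  have near: "x + \<sigma> *\<^sub>R a + \<tau> *\<^sub>R b \<in> ball x d"
    if "0 \<le> \<sigma>" "\<sigma> \<le> s" "0 \<le> \<tau>" "\<tau> \<le> s" "norm a + norm b = norm p + norm q" for \<sigma> \<tau> a b
  proof -
    have "norm (\<sigma> *\<^sub>R a + \<tau> *\<^sub>R b) \<le> \<sigma> * norm a + \<tau> * norm b"
      using norm_triangle_ineq[of "\<sigma> *\<^sub>R a" "\<tau> *\<^sub>R b"] that by simp
    also have "\<dots> \<le> s * norm a + s * norm b"
      using that by (intro add_mono mult_right_mono) auto
    also have "\<dots> < d"
      using that(5) \<open>s * (norm p + norm q) < d\<close> by (simp add: distrib_left[symmetric])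
    finally have "dist (x + \<sigma> *\<^sub>R a + \<tau> *\<^sub>R b) x < d" by (simp add: dist_norm)
    then show ?thesis by (simp add: dist_commute)
  qed
  obtain \<sigma>1 \<tau>1 where m1: "0 < \<sigma>1" "\<sigma>1 < s" "0 < \<tau>1" "\<tau>1 < s"
    "inner w (g (x + s *\<^sub>R p + s *\<^sub>R q) - g (x + s *\<^sub>R p) - g (x + s *\<^sub>R q) + g x)
       = s * s * inner w (dd g [q,p] (x + \<sigma>1 *\<^sub>R p + \<tau>1 *\<^sub>R q))"
    using mixed_difference_mean_value[OF g _ \<open>0 < s\<close> \<open>0 < s\<close>] near ball by blast
  obtain \<sigma>2 \<tau>2 where m2: "0 < \<sigma>2" "\<sigma>2 < s" "0 < \<tau>2" "\<tau>2 < s"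
    "inner w (g (x + s *\<^sub>R q + s *\<^sub>R p) - g (x + s *\<^sub>R q) - g (x + s *\<^sub>R p) + g x)
       = s * s * inner w (dd g [p,q] (x + \<sigma>2 *\<^sub>R q + \<tau>2 *\<^sub>R p))"
    using mixed_difference_mean_value[OF g _ \<open>0 < s\<close> \<open>0 < s\<close>] near[where a = q and b = p] ball
    by (smt (verit) subsetD)
  have "g (x + s *\<^sub>R q + s *\<^sub>R p) - g (x + s *\<^sub>R q) - g (x + s *\<^sub>R p)
      = g (x + s *\<^sub>R p + s *\<^sub>R q) - g (x + s *\<^sub>R p) - g (x + s *\<^sub>R q)"
    by (simp add: add_ac)
  then have "s * s * inner w (dd g [q,p] (x + \<sigma>1 *\<^sub>R p + \<tau>1 *\<^sub>R q))
      = s * s * inner w (dd g [p,q] (x + \<sigma>2 *\<^sub>R q + \<tau>2 *\<^sub>R p))"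
    using m1(5) m2(5) by metis
  then have "inner w (dd g [q,p] (x + \<sigma>1 *\<^sub>R p + \<tau>1 *\<^sub>R q))
      = inner w (dd g [p,q] (x + \<sigma>2 *\<^sub>R q + \<tau>2 *\<^sub>R p))"
    using \<open>0 < s\<close> by simp
  moreover have "x + \<sigma>1 *\<^sub>R p + \<tau>1 *\<^sub>R q \<in> ball x d" "x + \<sigma>2 *\<^sub>R q + \<tau>2 *\<^sub>R p \<in> ball x d"
    using near[of \<sigma>1 \<tau>1 p q] near[of \<sigma>2 \<tau>2 q p] m1 m2 by (simp_all add: add.commute)
  ultimately show ?thesis by blast
qed

lemma dd_swap:
  fixes g :: "'a::real_normed_vector \<Rightarrow> 'b::real_inner"
  assumes g: "smooth_on U g" and "open U" and "x \<in> U"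
  shows "dd g [p,q] x = dd g [q,p] x"
proof -
  have "inner w (dd g [q,p] x) = inner w (dd g [p,q] x)" for w
  proof (rule ccontr)
    define k where "k z = inner w (dd g [q,p] z)" for z
    define l where "l z = inner w (dd g [p,q] z)" for z
    assume "inner w (dd g [q,p] x) \<noteq> inner w (dd g [p,q] x)"
    then have e: "\<bar>k x - l x\<bar> / 2 > 0" unfolding k_def l_def by simp
    have "isCont k x" "isCont l x"
      using g \<open>open U\<close> \<open>x \<in> U\<close> unfolding smooth_on_def k_def l_def
      by (auto intro!: continuous_intros simp: continuous_on_eq_continuous_at simp del: dd.simps)
    then obtain d1 d2 where "0 < d1" "k ` ball x d1 \<subseteq> ball (k x) (\<bar>k x - l x\<bar> / 2)"
      and "0 < d2" "l ` ball x d2 \<subseteq> ball (l x) (\<bar>k x - l x\<bar> / 2)"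
      using e by (meson continuous_at_ball)
    moreover obtain d3 where "0 < d3" "ball x d3 \<subseteq> U"
      using \<open>open U\<close> \<open>x \<in> U\<close> open_contains_ball by blast
    moreover define d where "d = min d1 (min d2 d3)"
    ultimately have "0 < d" "ball x d \<subseteq> U" "ball x d \<subseteq> ball x d1" "ball x d \<subseteq> ball x d2"
      by auto
    then obtain y z where "y \<in> ball x d1" "z \<in> ball x d2" "k y = l z"
      using mixed_derivatives_meet_in_ball[OF g, of d x w q p] unfolding k_def l_def by blast
    with \<open>k ` _ \<subseteq> _\<close> \<open>l ` _ \<subseteq> _\<close>
    have "k y \<in> ball (k x) (\<bar>k x - l x\<bar> / 2)" "l z \<in> ball (l x) (\<bar>k x - l x\<bar> / 2)"
      by blast+
    with \<open>k y = l z\<close> show False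
      unfolding mem_ball dist_real_def by (simp add: abs_if split: if_splits)
  qed
  from this[of "dd g [q,p] x - dd g [p,q] x"]
  have "inner (dd g [q,p] x - dd g [p,q] x) (dd g [q,p] x - dd g [p,q] x) = 0"
    by (simp only: inner_diff_right)
  then show ?thesis by simp
qed

lemma linear_eq_basis_sum:
  fixes L :: "'a::euclidean_space \<Rightarrow> 'b::real_vector"
  assumes "linear L"
  shows "L y = (\<Sum>i\<in>Basis. (y \<bullet> i) *\<^sub>R L i)"
proof -
  have "L y = L (\<Sum>i\<in>Basis. (y \<bullet> i) *\<^sub>R i)" by (simp add: euclidean_representation)
  also have "\<dots> = (\<Sum>i\<in>Basis. (y \<bullet> i) *\<^sub>R L i)" using assms by (simp add: linear_sum linear_scale)
  finally show ?thesis .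
qed

lemma linear_dd_second_slot:
  fixes g :: "'a::real_normed_vector \<Rightarrow> 'b::real_inner"
  assumes "smooth_on U g" "open U" "x \<in> U"
  shows "linear (\<lambda>b. dd g [h,b] x)"
proof -
  have "linear (df (dd g [h]) x)" using smooth_on_linear_df[OF smooth_on_dd[OF assms(1)] assms(3)] .
  then show ?thesis using dd_swap[OF assms, of h] by simp
qed

lemma has_derivative_df_apply:
  fixes g :: "'a::euclidean_space \<Rightarrow> 'b::real_inner"
  assumes g: "smooth_on U g" and "open U" "x \<in> U" and a: "(a has_derivative a') (at x)"
  shows "((\<lambda>z. df g z (a z)) has_derivative (\<lambda>h. dd g [h, a x] x + df g x (a' h))) (at x)"
proof -
  have "((\<lambda>z. \<Sum>i\<in>Basis. (a z \<bullet> i) *\<^sub>R dd g [i] z) has_derivative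
      (\<lambda>h. \<Sum>i\<in>Basis. (a x \<bullet> i) *\<^sub>R df (dd g [i]) x h + (a' h \<bullet> i) *\<^sub>R dd g [i] x)) (at x)"
    by (rule has_derivative_sum, rule has_derivative_scaleR[OF has_derivative_inner_left[OF a]
          smooth_on_has_derivative_dd[OF g \<open>x \<in> U\<close>]])
  moreover have "(\<lambda>h. \<Sum>i\<in>Basis. (a x \<bullet> i) *\<^sub>R df (dd g [i]) x h + (a' h \<bullet> i) *\<^sub>R dd g [i] x)
      = (\<lambda>h. dd g [h, a x] x + df g x (a' h))"
  proof
    fix h
    show "(\<Sum>i\<in>Basis. (a x \<bullet> i) *\<^sub>R df (dd g [i]) x h + (a' h \<bullet> i) *\<^sub>R dd g [i] x)
      = dd g [h, a x] x + df g x (a' h)"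
      using linear_eq_basis_sum[OF linear_dd_second_slot[OF assms(1-3)], of h "a x"]
        linear_eq_basis_sum[OF smooth_on_linear_df[OF g \<open>x \<in> U\<close>], of "a' h"]
      by (simp add: sum.distrib)
  qed
  ultimately have "((\<lambda>z. \<Sum>i\<in>Basis. (a z \<bullet> i) *\<^sub>R dd g [i] z) has_derivative
      (\<lambda>h. dd g [h, a x] x + df g x (a' h))) (at x)" by simp
  then show ?thesis
  proof (rule has_derivative_transform_within_open[OF _ \<open>open U\<close> \<open>x \<in> U\<close>])
    fix z assume "z \<in> U"
    show "(\<Sum>i\<in>Basis. (a z \<bullet> i) *\<^sub>R dd g [i] z) = df g z (a z)"
      using linear_eq_basis_sum[OF smooth_on_linear_df[OF g \<open>z \<in> U\<close>], of "a z"] by simp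
  qed
qed

lemma inner_linear_skew:
  assumes "linear A" "linear B" "\<And>v. inner (A v) (B v) = 0"
  shows "inner (A a) (B b) = - inner (A b) (B a)"
  using assms(3)[of "a + b"] assms(3)[of a] assms(3)[of b]
  by (simp add: linear_add[OF assms(1)] linear_add[OF assms(2)] inner_add_left inner_add_right)

text \<open>Differentiating the polarized identity gives a tensor that is symmetric in its first two and
  antisymmetric in its last two arguments, hence zero.\<close>

lemma orthogonal_differentials_second_order:
  fixes g h :: "'a::real_normed_vector \<Rightarrow> 'b::real_inner"
  assumes g: "smooth_on U g" and h: "smooth_on U h" and "open U" "x \<in> U"
    and orth: "\<And>z v. z \<in> U \<Longrightarrow> inner (df g z v) (df h z v) = 0"
  shows "inner (dd g [p,q] x) (df h x b) + inner (df g x b) (dd h [p,q] x) = 0"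
proof -
  define S where "S p q b = inner (dd g [p,q] x) (df h x b) + inner (df g x b) (dd h [p,q] x)" for p q b
  have antisym: "S p a b = - S p b a" for p a b
  proof -
    have "inner (dd g [a] z) (dd h [b] z) + inner (dd g [b] z) (dd h [a] z) = 0" if "z \<in> U" for z
      using inner_linear_skew[OF smooth_on_linear_df[OF g that] smooth_on_linear_df[OF h that] orth[OF that], of a b]
      by simp
    moreover have "((\<lambda>z. inner (dd g [a] z) (dd h [b] z) + inner (dd g [b] z) (dd h [a] z)) has_derivative
        (\<lambda>p. (inner (dd g [a] x) (df (dd h [b]) x p) + inner (df (dd g [a]) x p) (dd h [b] x))
           + (inner (dd g [b] x) (df (dd h [a]) x p) + inner (df (dd g [b]) x p) (dd h [a] x)))) (at x)"
      by (intro has_derivative_add has_derivative_inner smooth_on_has_derivative_dd[OF g \<open>x \<in> U\<close>]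
          smooth_on_has_derivative_dd[OF h \<open>x \<in> U\<close>])
    ultimately have "(inner (dd g [a] x) (df (dd h [b]) x p) + inner (df (dd g [a]) x p) (dd h [b] x))
        + (inner (dd g [b] x) (df (dd h [a]) x p) + inner (df (dd g [b]) x p) (dd h [a] x)) = 0"
      by (rule has_derivative_locally_constant[OF \<open>open U\<close> \<open>x \<in> U\<close>])
    then show ?thesis unfolding S_def by (simp add: inner_commute algebra_simps)
  qed
  have sym: "S p q b = S q p b" for p q b
    unfolding S_def
    using dd_swap[OF g \<open>open U\<close> \<open>x \<in> U\<close>, of p q] dd_swap[OF h \<open>open U\<close> \<open>x \<in> U\<close>, of p q] by simp
  have "S p q b = - S q p b"
    using antisym[of p q b] antisym[of b p q] antisym[of q b p] sym[of p b q] sym[of b q p] by linarith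
  then have "S p q b = 0" using sym[of p q b] by linarith
  then show ?thesis unfolding S_def .
qed

lemma df_eqI: "(g has_derivative g') (at x) \<Longrightarrow> df g x = g'"
  unfolding df_def by (rule frechet_derivative_at[symmetric])

lemma has_derivative_df_transform:
  assumes "G differentiable (at x)" "open U" "x \<in> U" "\<And>z. z \<in> U \<Longrightarrow> g z = G z"
  shows "(g has_derivative df g x) (at x)"
proof -
  obtain G' where "(G has_derivative G') (at x)" using assms(1) unfolding differentiable_def by blast
  then have "(g has_derivative G') (at x)"
    by (rule has_derivative_transform_within_open[OF _ assms(2,3)]) (simp add: assms(4))
  then show ?thesis using df_eqI by metis
qed

section \<open>Gram matrices and orthogonal projections\<close>

lemma differentiable_prod_fun:
  fixes f :: "'i \<Rightarrow> 'a::real_normed_vector \<Rightarrow> real"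
  assumes "\<And>i. i \<in> I \<Longrightarrow> f i differentiable (at x)"
  shows "(\<lambda>z. \<Prod>i\<in>I. f i z) differentiable (at x)"
proof -
  from assms obtain f' where "\<And>i. i \<in> I \<Longrightarrow> (f i has_derivative f' i) (at x)"
    unfolding differentiable_def by metis
  then show ?thesis unfolding differentiable_def by (blast intro: has_derivative_prod)
qed

lemma differentiable_det:
  fixes M :: "'a::real_normed_vector \<Rightarrow> real^'k^'k"
  assumes "\<And>i j. (\<lambda>z. M z $ i $ j) differentiable (at x)"
  shows "(\<lambda>z. det (M z)) differentiable (at x)"
  unfolding det_def
  by (intro differentiable_sum ballI differentiable_mult differentiable_const differentiable_prod_fun assms)
    simp

definition gram :: "(real^'n \<Rightarrow> 'b::real_inner) \<Rightarrow> real^'n^'n" where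
  "gram A = (\<chi> i j. inner (A (axis i 1)) (A (axis j 1)))"

text \<open>Cramer's rule for the normal equations \<open>\<langle>A e\<^sub>k, A a\<rangle> = b\<^sub>k\<close>; the explicit formula shows that
  the solution depends differentiably on \<open>A\<close> and \<open>b\<close>.\<close>

definition gram_solve :: "(real^'n \<Rightarrow> 'b::real_inner) \<Rightarrow> real^'n \<Rightarrow> real^'n" where
  "gram_solve A b = (\<chi> k. det (\<chi> i j. if j = k then b $ i else gram A $ i $ j) / det (gram A))"

lemma linear_eq_axis_sum:
  fixes A :: "real^'n \<Rightarrow> 'b::real_vector"
  assumes "linear A"
  shows "A a = (\<Sum>j\<in>UNIV. (a $ j) *\<^sub>R A (axis j 1))"
proof -
  have "a = (\<Sum>j\<in>UNIV. (a $ j) *\<^sub>R axis j 1)"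
    using basis_expansion[of a] by (simp add: scalar_mult_eq_scaleR)
  then show ?thesis using assms by (metis (no_types, lifting) linear_scale linear_sum sum.cong)
qed

lemma linear_functional_eq_0:
  fixes \<phi> :: "real^'n \<Rightarrow> real"
  assumes "linear \<phi>" "\<And>k. \<phi> (axis k 1) = 0"
  shows "\<phi> v = 0"
  using linear_eq_axis_sum[OF assms(1), of v] assms(2) by simp

lemma gram_mult_vector:
  fixes A :: "real^'n \<Rightarrow> 'b::real_inner"
  assumes "linear A"
  shows "(gram A *v a) $ i = inner (A (axis i 1)) (A a)"
  using linear_eq_axis_sum[OF assms, of a]
  by (simp add: matrix_vector_mult_def gram_def inner_sum_right mult.commute)

lemma det_gram_nonzero:
  fixes A :: "real^'n \<Rightarrow> 'b::real_inner"
  assumes "linear A" "inj A"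
  shows "det (gram A) \<noteq> 0"
proof -
  have "a = 0" if "gram A *v a = 0" for a
  proof -
    have "inner (A a) (A a) = (\<Sum>j\<in>UNIV. a $ j * (gram A *v a) $ j)"
      using linear_eq_axis_sum[OF assms(1), of a]
      by (simp add: inner_sum_left gram_mult_vector[OF assms(1)])
    then have "A a = 0" using that by simp
    then show "a = 0" using assms by (metis linear_0 injD)
  qed
  then have "\<exists>B. B ** gram A = mat 1" using matrix_left_invertible_ker by blast
  then show ?thesis using invertible_left_inverse invertible_det_nz by blast
qed

lemma gram_solve_iff:
  fixes A :: "real^'n \<Rightarrow> 'b::real_inner"
  assumes "linear A" "inj A"
  shows "(\<forall>k. inner (A (axis k 1)) (A a) = b $ k) \<longleftrightarrow> a = gram_solve A b"
proof -
  have "(\<forall>k. inner (A (axis k 1)) (A a) = b $ k) \<longleftrightarrow> gram A *v a = b"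
    by (simp add: vec_eq_iff gram_mult_vector[OF assms(1)])
  also have "\<dots> \<longleftrightarrow> a = gram_solve A b"
    unfolding gram_solve_def by (rule cramer[OF det_gram_nonzero[OF assms]])
  finally show ?thesis .
qed

lemma differentiable_gram_solve:
  fixes F :: "'a::real_normed_vector \<Rightarrow> real^'n \<Rightarrow> 'b::real_inner" and b :: "'a \<Rightarrow> real^'n"
  assumes "\<And>i j. (\<lambda>z. inner (F z (axis i 1)) (F z (axis j 1))) differentiable (at x)"
    and "\<And>i. (\<lambda>z. b z $ i) differentiable (at x)"
    and "linear (F x)" "inj (F x)"
  shows "(\<lambda>z. gram_solve (F z) (b z)) differentiable (at x)"
proof -
  have "gram_solve (F z) (b z) = (\<Sum>k\<in>UNIV.
      (det (\<chi> i j. if j = k then b z $ i else gram (F z) $ i $ j) / det (gram (F z))) *\<^sub>R axis k 1)" for z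
    using linear_eq_axis_sum[OF linear_id, of "gram_solve (F z) (b z)"] by (simp add: gram_solve_def)
  moreover have "(\<lambda>z. det (gram (F z))) differentiable (at x)"
    by (rule differentiable_det) (simp add: gram_def assms(1))
  moreover have "(\<lambda>z. det (\<chi> i j. if j = k then b z $ i else gram (F z) $ i $ j)) differentiable (at x)" for k
  proof (rule differentiable_det)
    fix i j
    show "(\<lambda>z. (\<chi> i j. if j = k then b z $ i else gram (F z) $ i $ j) $ i $ j) differentiable (at x)"
      by (cases "j = k") (simp_all add: gram_def assms(1,2))
  qed
  ultimately show ?thesis
    by (simp, intro differentiable_sum ballI differentiable_scaleR differentiable_const differentiable_divide
        det_gram_nonzero[OF assms(3,4)]) simp_all
qed

lemma the_inj_eq: "inj A \<Longrightarrow> (THE w. A w = A a) = a"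
  by (auto intro!: the_equality dest: injD)

lemma proj_eqI:
  fixes S :: "'a::real_inner set"
  assumes "subspace S" "w \<in> S" "\<And>s. s \<in> S \<Longrightarrow> inner (u - w) s = 0"
  shows "proj S u = w"
  unfolding proj_def
proof (rule the_equality)
  show "w \<in> S \<and> (\<forall>s\<in>S. inner (u - w) s = 0)" using assms by auto
  fix w' assume w': "w' \<in> S \<and> (\<forall>s\<in>S. inner (u - w') s = 0)"
  then have "w' - w \<in> S" using assms subspace_diff by blast
  then have "inner (w' - w) (w' - w) = inner (u - w) (w' - w) - inner (u - w') (w' - w)"
    by (simp add: inner_diff_left inner_diff_right)
  also have "\<dots> = 0" using \<open>w' - w \<in> S\<close> w' assms(3) by auto
  finally show "w' = w" by simp
qed

definition range_coord :: "(real^'n \<Rightarrow> 'b::real_inner) \<Rightarrow> 'b \<Rightarrow> real^'n" where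
  "range_coord A u = gram_solve A (\<chi> i. inner (A (axis i 1)) u)"

lemma inner_range_coord:
  fixes A :: "real^'n \<Rightarrow> 'b::real_inner"
  assumes "linear A" "inj A"
  shows "inner (A (range_coord A u)) (A b) = inner u (A b)"
proof -
  have "linear (\<lambda>b. inner (u - A (range_coord A u)) (A b))"
    using assms(1) by (intro linearI) (simp_all add: linear_add linear_scale inner_add_right)
  moreover have "inner (u - A (range_coord A u)) (A (axis k 1)) = 0" for k
    using gram_solve_iff[OF assms, of "range_coord A u" "\<chi> i. inner (A (axis i 1)) u"]
    unfolding range_coord_def by (simp add: inner_diff_left inner_diff_right inner_commute)
  ultimately have "inner (u - A (range_coord A u)) (A b) = 0"
    using linear_eq_axis_sum[of "\<lambda>b. inner (u - A (range_coord A u)) (A b)" b] by simp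
  then show ?thesis by (simp add: inner_diff_left)
qed

lemma range_coord_apply:
  fixes A :: "real^'n \<Rightarrow> 'b::real_inner"
  assumes "linear A" "inj A" "\<And>b. inner u (A b) = inner (A a) (A b)"
  shows "range_coord A u = a"
  using gram_solve_iff[OF assms(1,2), of a "\<chi> i. inner (A (axis i 1)) u"] assms(3)
  unfolding range_coord_def by (simp add: inner_commute)

lemma proj_range:
  fixes A :: "real^'n \<Rightarrow> 'b::real_inner"
  assumes "linear A" "inj A"
  shows "proj (range A) u = A (range_coord A u)"
  using assms inner_range_coord[OF assms]
  by (intro proj_eqI) (auto simp: linear_subspace_image inner_diff_left)

section \<open>The normal space of an immersion\<close>

lemma normal_field_derivative:
  assumes "smooth_on U f" "smooth_on U N" "open U" "x \<in> U" "\<And>z. z \<in> U \<Longrightarrow> N z \<in> nor f z"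
  shows "inner (df N x v) (df f x a) + inner (N x) (dd f [v,a] x) = 0"
proof -
  have "inner (N z) (dd f [a] z) = 0" if "z \<in> U" for z
    using assms(5)[OF that] unfolding nor_def tang_def by simp
  from inner_derivative_of_constant[OF assms(3,4) this smooth_on_has_derivative[OF assms(2,4)]
      smooth_on_has_derivative_dd[OF assms(1,4)]]
  show ?thesis by (simp add: add.commute)
qed

lemma inner_nor_df: "w \<in> nor f x \<Longrightarrow> inner w (df f x a) = 0"
  unfolding nor_def tang_def by auto

lemma inner_R_df: "r \<in> Rsp f \<eta> x \<Longrightarrow> inner r (df f x a) = 0"
  and inner_R_eta: "r \<in> Rsp f \<eta> x \<Longrightarrow> inner r (\<eta> x) = 0"
  unfolding Rsp_def by (auto intro: inner_nor_df)

lemma subspace_R: "subspace (Rsp f \<eta> x)"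
  unfolding subspace_def Rsp_def nor_def by (auto simp: inner_add_left)

lemma df_in_TP: "df f x a \<in> TP f \<eta> x"
  unfolding TP_def by (metis (mono_tags, lifting) add_0_right mem_Collect_eq scale_zero_left)

lemma inner_TP_R:
  assumes "w \<in> TP f \<eta> x" "r \<in> Rsp f \<eta> x"
  shows "inner w r = 0"
proof -
  obtain a t where "w = df f x a + t *\<^sub>R \<eta> x" using assms(1) unfolding TP_def by blast
  then show ?thesis
    using inner_R_df[OF assms(2), of a] inner_R_eta[OF assms(2)] by (simp add: inner_add_right inner_commute[of _ r])
qed

lemma subspace_nor: "subspace (nor f x)"
  unfolding subspace_def nor_def by (auto simp: inner_add_left)

section \<open>Infinitesimal bendings satisfying condition (*)\<close>

locale bending_star =
  fixes U :: "(real^'n) set" and f \<tau> \<eta> \<xi> :: "real^'n \<Rightarrow> real^'m"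
  assumes immersion: "isometric_immersion U f"
    and bending: "inf_bending U f \<tau>"
    and star: "cond_star U f \<tau> \<eta> \<xi>"
begin

lemma open_U: "open U"
  and smooth_f: "smooth_on U f"
  and inj_df_f: "x \<in> U \<Longrightarrow> inj (df f x)"
  using immersion unfolding isometric_immersion_def by auto

lemma smooth_tau: "smooth_on U \<tau>"
  and bending_orthogonal: "x \<in> U \<Longrightarrow> inner (df f x v) (df \<tau> x v) = 0"
  using bending unfolding inf_bending_def by auto

lemma smooth_eta: "smooth_on U \<eta>"
  and smooth_xi: "smooth_on U \<xi>"
  and eta_normal: "x \<in> U \<Longrightarrow> \<eta> x \<in> nor f x"
  and norm_eta: "x \<in> U \<Longrightarrow> norm (\<eta> x) = 1"
  and xi_R: "x \<in> U \<Longrightarrow> \<xi> x \<in> Rsp f \<eta> x"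
  using star unfolding cond_star_def by auto

lemma linear_df_f: "x \<in> U \<Longrightarrow> linear (df f x)"
  and linear_df_tau: "x \<in> U \<Longrightarrow> linear (df \<tau> x)"
  using smooth_on_linear_df smooth_f smooth_tau by blast+

lemma xi_normal: "x \<in> U \<Longrightarrow> \<xi> x \<in> nor f x"
  using xi_R unfolding Rsp_def by blast

lemma inner_eta_df [simp]: "x \<in> U \<Longrightarrow> inner (\<eta> x) (df f x a) = 0"
  and inner_xi_df [simp]: "x \<in> U \<Longrightarrow> inner (\<xi> x) (df f x a) = 0"
  and inner_xi_eta [simp]: "x \<in> U \<Longrightarrow> inner (\<xi> x) (\<eta> x) = 0"
  and inner_df_eta [simp]: "x \<in> U \<Longrightarrow> inner (df f x a) (\<eta> x) = 0"
  and inner_df_xi [simp]: "x \<in> U \<Longrightarrow> inner (df f x a) (\<xi> x) = 0"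
  and inner_eta_xi [simp]: "x \<in> U \<Longrightarrow> inner (\<eta> x) (\<xi> x) = 0"
  and inner_eta_eta [simp]: "x \<in> U \<Longrightarrow> inner (\<eta> x) (\<eta> x) = 1"
  using inner_nor_df[OF eta_normal] inner_nor_df[OF xi_normal] inner_R_eta[OF xi_R] norm_eta
  by (auto simp: norm_eq_sqrt_inner inner_commute)

lemma subspace_TP:
  assumes "x \<in> U"
  shows "subspace (TP f \<eta> x)"
  unfolding subspace_def
proof (intro conjI ballI allI)
  note F = linear_df_f[OF assms]
  show "0 \<in> TP f \<eta> x"
    unfolding TP_def using linear_0[OF F] by (metis (mono_tags, lifting) add_0 mem_Collect_eq scale_zero_left)
  show "u + w \<in> TP f \<eta> x" if u: "u \<in> TP f \<eta> x" and w: "w \<in> TP f \<eta> x" for u w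
  proof -
    obtain a t b s where "u = df f x a + t *\<^sub>R \<eta> x" "w = df f x b + s *\<^sub>R \<eta> x"
      using u w unfolding TP_def by blast
    then have "u + w = df f x (a + b) + (t + s) *\<^sub>R \<eta> x"
      by (simp add: linear_add[OF F] algebra_simps)
    then show ?thesis unfolding TP_def by blast
  qed
  show "c *\<^sub>R u \<in> TP f \<eta> x" if u: "u \<in> TP f \<eta> x" for c u
  proof -
    obtain a t where "u = df f x a + t *\<^sub>R \<eta> x" using u unfolding TP_def by blast
    then have "c *\<^sub>R u = df f x (c *\<^sub>R a) + (c * t) *\<^sub>R \<eta> x"
      by (simp add: linear_scale[OF F] algebra_simps)
    then show ?thesis unfolding TP_def by blast
  qed
qed

lemma proj_TP_add_R:
  assumes "x \<in> U" "w \<in> TP f \<eta> x" "r \<in> Rsp f \<eta> x"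
  shows "proj (TP f \<eta> x) (w + r) = w"
  using assms inner_TP_R[OF _ assms(3)] subspace_TP[OF assms(1)]
  by (intro proj_eqI) (auto simp: inner_commute)

lemma proj_R_add_TP:
  assumes "x \<in> U" "w \<in> TP f \<eta> x" "r \<in> Rsp f \<eta> x"
  shows "proj (Rsp f \<eta> x) (w + r) = r"
  using assms inner_TP_R[OF assms(2)] subspace_R by (intro proj_eqI) auto

lemma TP_R_decomposition:
  assumes "x \<in> U"
  obtains w r where "w \<in> TP f \<eta> x" "r \<in> Rsp f \<eta> x" "u = w + r"
proof
  define w where "w = df f x (range_coord (df f x) u) + inner u (\<eta> x) *\<^sub>R \<eta> x"
  show "w \<in> TP f \<eta> x" unfolding w_def TP_def by blast
  have "inner (u - w) (df f x a) = 0" for a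
    using inner_range_coord[OF linear_df_f inj_df_f, OF assms assms] assms
    by (simp add: w_def inner_diff_left inner_add_left)
  moreover have "inner (u - w) (\<eta> x) = 0"
    using assms by (simp add: w_def inner_diff_left inner_add_left)
  ultimately show "u - w \<in> Rsp f \<eta> x" unfolding Rsp_def nor_def tang_def by auto
qed simp

lemma proj_TP_in_TP: "x \<in> U \<Longrightarrow> proj (TP f \<eta> x) u \<in> TP f \<eta> x"
  and proj_R_in_R: "x \<in> U \<Longrightarrow> proj (Rsp f \<eta> x) u \<in> Rsp f \<eta> x"
  and proj_TP_add_proj_R: "x \<in> U \<Longrightarrow> proj (TP f \<eta> x) u + proj (Rsp f \<eta> x) u = u"
  using TP_R_decomposition[of x u] proj_TP_add_R[of x] proj_R_add_TP[of x] by metis+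

lemma inner_proj_nor:
  assumes "x \<in> U" "w \<in> nor f x"
  shows "inner (proj (nor f x) u) w = inner u w"
proof -
  let ?c = "range_coord (df f x) u"
  have "proj (nor f x) u = u - df f x ?c"
  proof (rule proj_eqI[OF subspace_nor])
    show "u - df f x ?c \<in> nor f x"
      using inner_range_coord[OF linear_df_f inj_df_f, OF assms(1) assms(1)]
      unfolding nor_def tang_def by (auto simp: inner_diff_left)
    show "inner (u - (u - df f x ?c)) s = 0" if "s \<in> nor f x" for s
      using inner_nor_df[OF that] by (simp add: inner_commute)
  qed
  then show ?thesis using inner_nor_df[OF assms(2), of ?c] by (simp add: inner_diff_right inner_commute[of _ w])
qed

lemma Yfld_iff:
  assumes "x \<in> U"
  shows "(\<forall>v. inner (df f x y) (df f x v) + inner (df \<tau> x v) (\<eta> x) = 0)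
    \<longleftrightarrow> y = gram_solve (df f x) (\<chi> i. - inner (df \<tau> x (axis i 1)) (\<eta> x))"
proof -
  note F = linear_df_f[OF assms] and T = linear_df_tau[OF assms]
  have "(\<forall>v. inner (df f x y) (df f x v) + inner (df \<tau> x v) (\<eta> x) = 0)
      \<longleftrightarrow> (\<forall>k. inner (df f x (axis k 1)) (df f x y) = - inner (df \<tau> x (axis k 1)) (\<eta> x))"
  proof
    assume "\<forall>k. inner (df f x (axis k 1)) (df f x y) = - inner (df \<tau> x (axis k 1)) (\<eta> x)"
    moreover have "linear (\<lambda>v. inner (df f x y) (df f x v) + inner (df \<tau> x v) (\<eta> x))"
      using F T by (intro linearI) (simp_all add: linear_add linear_scale inner_add_left inner_add_right
          algebra_simps)
    ultimately show "\<forall>v. inner (df f x y) (df f x v) + inner (df \<tau> x v) (\<eta> x) = 0"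
      by (auto intro: linear_functional_eq_0 simp: inner_commute)
  next
    assume h: "\<forall>v. inner (df f x y) (df f x v) + inner (df \<tau> x v) (\<eta> x) = 0"
    show "\<forall>k. inner (df f x (axis k 1)) (df f x y) = - inner (df \<tau> x (axis k 1)) (\<eta> x)"
    proof
      fix k
      from h[rule_format, of "axis k 1"]
      show "inner (df f x (axis k 1)) (df f x y) = - inner (df \<tau> x (axis k 1)) (\<eta> x)"
        by (simp add: inner_commute eq_neg_iff_add_eq_0)
    qed
  qed
  then show ?thesis
    using gram_solve_iff[OF F inj_df_f[OF assms], of y "\<chi> i. - inner (df \<tau> x (axis i 1)) (\<eta> x)"] by simp
qed

lemma Yfld_eq: "x \<in> U \<Longrightarrow> Yfld f \<tau> \<eta> x = gram_solve (df f x) (\<chi> i. - inner (df \<tau> x (axis i 1)) (\<eta> x))"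
  unfolding Yfld_def Yfld_iff by simp

lemma inner_df_Yfld: "x \<in> U \<Longrightarrow> inner (df f x a) (df f x (Yfld f \<tau> \<eta> x)) = - inner (df \<tau> x a) (\<eta> x)"
  using Yfld_iff[of x "Yfld f \<tau> \<eta> x"] Yfld_eq[of x] by (simp add: inner_commute eq_neg_iff_add_eq_0)

lemma Lbar_TP:
  assumes "x \<in> U"
  shows "Lbar f \<tau> \<eta> \<xi> x (df f x a + t *\<^sub>R \<eta> x) = df \<tau> x a + t *\<^sub>R (df f x (Yfld f \<tau> \<eta> x) + \<xi> x)"
proof -
  have "range_coord (df f x) (df f x a + t *\<^sub>R \<eta> x) = a"
    using assms by (intro range_coord_apply[OF linear_df_f inj_df_f]) (simp_all add: inner_add_left)
  then have "(THE b. df f x b = proj (tang f x) (df f x a + t *\<^sub>R \<eta> x)) = a"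
    using proj_range[OF linear_df_f inj_df_f, OF assms assms] the_inj_eq[OF inj_df_f[OF assms]]
    unfolding tang_def by simp
  moreover have "inner (df f x a + t *\<^sub>R \<eta> x) (\<eta> x) = t" using assms by (simp add: inner_add_left)
  ultimately show ?thesis unfolding Lbar_def by simp
qed

lemma Lbar_df: "x \<in> U \<Longrightarrow> Lbar f \<tau> \<eta> \<xi> x (df f x a) = df \<tau> x a"
  using Lbar_TP[of x a 0] by simp

lemma Lbar_add:
  assumes "x \<in> U" "u \<in> TP f \<eta> x" "w \<in> TP f \<eta> x"
  shows "Lbar f \<tau> \<eta> \<xi> x (u + w) = Lbar f \<tau> \<eta> \<xi> x u + Lbar f \<tau> \<eta> \<xi> x w"
proof -
  obtain a t b s where u: "u = df f x a + t *\<^sub>R \<eta> x" and w: "w = df f x b + s *\<^sub>R \<eta> x"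
    using assms(2,3) unfolding TP_def by blast
  then have "u + w = df f x (a + b) + (t + s) *\<^sub>R \<eta> x"
    by (simp add: linear_add[OF linear_df_f[OF assms(1)]] algebra_simps)
  then have "Lbar f \<tau> \<eta> \<xi> x (u + w) = df \<tau> x (a + b) + (t + s) *\<^sub>R (df f x (Yfld f \<tau> \<eta> x) + \<xi> x)"
    using Lbar_TP[OF assms(1)] by simp
  also have "\<dots> = Lbar f \<tau> \<eta> \<xi> x u + Lbar f \<tau> \<eta> \<xi> x w"
    unfolding u w Lbar_TP[OF assms(1)] by (simp add: linear_add[OF linear_df_tau[OF assms(1)]] algebra_simps)
  finally show ?thesis .
qed

lemma inner_Lbar_self:
  assumes "x \<in> U" "u \<in> TP f \<eta> x"
  shows "inner u (Lbar f \<tau> \<eta> \<xi> x u) = 0"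
proof -
  obtain a t where "u = df f x a + t *\<^sub>R \<eta> x" using assms(2) unfolding TP_def by blast
  then show ?thesis
    using assms(1) bending_orthogonal[OF assms(1), of a] inner_df_Yfld[OF assms(1), of a]
    by (simp add: Lbar_TP inner_add_left inner_add_right inner_commute[of "\<eta> x"] algebra_simps)
qed

lemma bending_skew: "x \<in> U \<Longrightarrow> inner (df f x a) (df \<tau> x b) = - inner (df f x b) (df \<tau> x a)"
  by (rule inner_linear_skew[OF linear_df_f linear_df_tau bending_orthogonal])

lemma bending_second_order:
  "x \<in> U \<Longrightarrow> inner (dd f [p,q] x) (df \<tau> x b) + inner (df f x b) (dd \<tau> [p,q] x) = 0"
  by (rule orthogonal_differentials_second_order[OF smooth_f smooth_tau open_U _ bending_orthogonal])

lemma has_derivative_Yfld: "x \<in> U \<Longrightarrow> (Yfld f \<tau> \<eta> has_derivative df (Yfld f \<tau> \<eta>) x) (at x)"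
proof (rule has_derivative_df_transform[OF _ open_U _ Yfld_eq])
  assume "x \<in> U"
  have f: "dd f vs differentiable (at x)" and \<tau>: "dd \<tau> vs differentiable (at x)" for vs
    using smooth_f smooth_tau \<open>x \<in> U\<close> unfolding smooth_on_def by blast+
  have \<eta>: "\<eta> differentiable (at x)"
    using smooth_on_has_derivative[OF smooth_eta \<open>x \<in> U\<close>] differentiable_def by blast
  have "(\<lambda>z. inner (df f z (axis i 1)) (df f z (axis j 1))) differentiable (at x)" for i j
    using differentiable_inner[OF f[of "[axis i 1]"] f[of "[axis j 1]"]] by simp
  moreover have "(\<lambda>z. (\<chi> i. - inner (df \<tau> z (axis i 1)) (\<eta> z)) $ i) differentiable (at x)" for i
    using differentiable_minus[OF differentiable_inner[OF \<tau>[of "[axis i 1]"] \<eta>]] by simp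
  ultimately show "(\<lambda>z. gram_solve (df f z) (\<chi> i. - inner (df \<tau> z (axis i 1)) (\<eta> z))) differentiable (at x)"
    using linear_df_f[OF \<open>x \<in> U\<close>] inj_df_f[OF \<open>x \<in> U\<close>]
    by (rule differentiable_gram_solve[where F = "df f"])
qed

lemma Yfld_derivative_identity:
  assumes "x \<in> U"
  shows "inner (dd f [v,b] x) (df f x (Yfld f \<tau> \<eta> x))
    + inner (df f x b) (dd f [v, Yfld f \<tau> \<eta> x] x + df f x (df (Yfld f \<tau> \<eta>) x v))
    + inner (dd \<tau> [v,b] x) (\<eta> x) + inner (df \<tau> x b) (df \<eta> x v) = 0"
proof -
  have "inner (dd f [b] z) (df f z (Yfld f \<tau> \<eta> z)) + inner (dd \<tau> [b] z) (\<eta> z) = 0" if "z \<in> U" for z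
    using inner_df_Yfld[OF that, of b] by simp
  moreover have "((\<lambda>z. inner (dd f [b] z) (df f z (Yfld f \<tau> \<eta> z)) + inner (dd \<tau> [b] z) (\<eta> z))
      has_derivative (\<lambda>h. (inner (dd f [b] x) (dd f [h, Yfld f \<tau> \<eta> x] x + df f x (df (Yfld f \<tau> \<eta>) x h))
          + inner (df (dd f [b]) x h) (df f x (Yfld f \<tau> \<eta> x)))
        + (inner (dd \<tau> [b] x) (df \<eta> x h) + inner (df (dd \<tau> [b]) x h) (\<eta> x)))) (at x)"
    by (intro has_derivative_add has_derivative_inner smooth_on_has_derivative_dd[OF smooth_f assms]
        has_derivative_df_apply[OF smooth_f open_U assms has_derivative_Yfld[OF assms]]
        smooth_on_has_derivative_dd[OF smooth_tau assms] smooth_on_has_derivative[OF smooth_eta assms])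
  ultimately have "(inner (dd f [b] x) (dd f [v, Yfld f \<tau> \<eta> x] x + df f x (df (Yfld f \<tau> \<eta>) x v))
          + inner (df (dd f [b]) x v) (df f x (Yfld f \<tau> \<eta> x)))
        + (inner (dd \<tau> [b] x) (df \<eta> x v) + inner (df (dd \<tau> [b]) x v) (\<eta> x)) = 0"
    by (rule has_derivative_locally_constant[OF open_U assms])
  then show ?thesis by (simp add: algebra_simps)
qed

lemma star_pointwise:
  assumes "x \<in> U"
  shows "inner (dd \<tau> [v,b] x) (\<eta> x) + inner (dd f [v,b] x) (df f x (Yfld f \<tau> \<eta> x) + \<xi> x) = 0"
proof -
  let ?u = "dd f [v,b] x" and ?c = "range_coord (df f x) (dd f [v,b] x)"
  have "inner (beta f \<tau> (\<lambda>_. v) (\<lambda>_. b) x) (\<eta> x) + inner (sff f (\<lambda>_. v) (\<lambda>_. b) x) (\<xi> x) = 0"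
    using star assms smooth_on_const unfolding cond_star_def vector_field_def by blast
  moreover have "nablat (\<lambda>_. v) (push f (\<lambda>_. b)) x = ?u" by (simp add: nablat_def push_def[abs_def])
  moreover have "lc f (\<lambda>_. v) (\<lambda>_. b) x = ?c"
    unfolding lc_def \<open>nablat (\<lambda>_. v) (push f (\<lambda>_. b)) x = ?u\<close> tang_def
      proj_range[OF linear_df_f inj_df_f, OF assms assms] by (rule the_inj_eq[OF inj_df_f[OF assms]])
  ultimately have "inner (dd \<tau> [v,b] x - df \<tau> x ?c) (\<eta> x) + inner ?u (\<xi> x) = 0"
    unfolding beta_def sff_def Bt_def inner_proj_nor[OF assms eta_normal[OF assms]]
      inner_proj_nor[OF assms xi_normal[OF assms]]
    by (simp add: Lop_def[abs_def] nablat_def)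
  moreover have "inner (df \<tau> x ?c) (\<eta> x) = - inner ?u (df f x (Yfld f \<tau> \<eta> x))"
    using inner_df_Yfld[OF assms, of ?c] inner_range_coord[OF linear_df_f inj_df_f, OF assms assms] by simp
  ultimately show ?thesis by (simp add: inner_diff_left inner_add_right)
qed

lemma inner_derivative_xi_eta:
  assumes "x \<in> U"
  shows "inner (df \<xi> x v) (\<eta> x) + inner (\<xi> x) (df \<eta> x v) = 0"
  using inner_derivative_of_constant[OF open_U assms inner_xi_eta smooth_on_has_derivative[OF smooth_xi assms]
      smooth_on_has_derivative[OF smooth_eta assms], of v]
  by (simp add: add.commute)

text \<open>The derivatives at \<open>x\<close> in direction \<open>v\<close> of the sections \<open>f\<^sub>* a + t \<eta>\<close> and
  \<open>Lbar (f\<^sub>* a + t \<eta>) = L a + t (f\<^sub>* Y + \<xi>)\<close> with constant coefficients \<open>a\<close> and \<open>t\<close>.\<close>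

definition nabla_frame :: "real^'n \<Rightarrow> real^'n \<Rightarrow> real^'n \<Rightarrow> real \<Rightarrow> real^'m" where
  "nabla_frame x v a t = dd f [v,a] x + t *\<^sub>R df \<eta> x v"

definition nabla_Lbar_frame :: "real^'n \<Rightarrow> real^'n \<Rightarrow> real^'n \<Rightarrow> real \<Rightarrow> real^'m" where
  "nabla_Lbar_frame x v a t = dd \<tau> [v,a] x
     + t *\<^sub>R (dd f [v, Yfld f \<tau> \<eta> x] x + df f x (df (Yfld f \<tau> \<eta>) x v) + df \<xi> x v)"

lemma inner_nabla_Lbar_tangent:
  assumes "x \<in> U"
  shows "inner (df f x b) (nabla_Lbar_frame x v a t - Lbar f \<tau> \<eta> \<xi> x (df f x p + q *\<^sub>R \<eta> x))
    + inner (nabla_frame x v a t - (df f x p + q *\<^sub>R \<eta> x)) (df \<tau> x b) = 0"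
proof -
  have "inner (df \<eta> x v) (df \<tau> x b) + inner (df \<xi> x v) (df f x b)
      + inner (df f x b) (dd f [v, Yfld f \<tau> \<eta> x] x + df f x (df (Yfld f \<tau> \<eta>) x v)) = 0"
    using Yfld_derivative_identity[OF assms, of v b] star_pointwise[OF assms, of v b]
      normal_field_derivative[OF smooth_f smooth_xi open_U assms xi_normal, of v b]
    by (simp add: inner_add_left inner_add_right inner_commute)
  then have "t * (inner (df \<eta> x v) (df \<tau> x b) + inner (df \<xi> x v) (df f x b)
      + inner (df f x b) (dd f [v, Yfld f \<tau> \<eta> x] x + df f x (df (Yfld f \<tau> \<eta>) x v))) = 0"
    by simp
  then show ?thesis
    using bending_second_order[OF assms, of v a b] bending_skew[OF assms, of b p] inner_df_Yfld[OF assms, of b]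
      assms
    unfolding nabla_Lbar_frame_def nabla_frame_def Lbar_TP[OF assms]
    by (simp add: inner_add_left inner_add_right inner_diff_left inner_diff_right inner_commute algebra_simps)
qed

lemma inner_nabla_Lbar_normal:
  assumes "x \<in> U" and R: "\<And>c. inner (nabla_frame x v a t - (df f x p + q *\<^sub>R \<eta> x)) (df f x c) = 0"
  shows "inner (\<eta> x) (nabla_Lbar_frame x v a t - Lbar f \<tau> \<eta> \<xi> x (df f x p + q *\<^sub>R \<eta> x))
    + inner (nabla_frame x v a t - (df f x p + q *\<^sub>R \<eta> x)) (df f x (Yfld f \<tau> \<eta> x) + \<xi> x) = 0"
proof -
  have "inner (\<eta> x) (dd f [v, Yfld f \<tau> \<eta> x] x) + inner (df \<eta> x v) (df f x (Yfld f \<tau> \<eta> x))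
      + (inner (\<eta> x) (df \<xi> x v) + inner (df \<eta> x v) (\<xi> x)) = 0"
    using normal_field_derivative[OF smooth_f smooth_eta open_U assms(1) eta_normal, of v "Yfld f \<tau> \<eta> x"]
      inner_derivative_xi_eta[OF assms(1), of v]
    by (simp add: inner_commute)
  then have "t * (inner (\<eta> x) (dd f [v, Yfld f \<tau> \<eta> x] x) + inner (df \<eta> x v) (df f x (Yfld f \<tau> \<eta> x))
      + (inner (\<eta> x) (df \<xi> x v) + inner (df \<eta> x v) (\<xi> x))) = 0"
    by simp
  then show ?thesis
    using star_pointwise[OF assms(1), of v a] inner_df_Yfld[OF assms(1), of p] R[of "Yfld f \<tau> \<eta> x"] assms(1)
    unfolding nabla_Lbar_frame_def nabla_frame_def Lbar_TP[OF assms(1)]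
    by (simp add: inner_add_left inner_add_right inner_diff_left inner_diff_right inner_commute[of "\<eta> x"]
        algebra_simps)
qed

lemma inner_nabla_Lbar_TP:
  assumes "x \<in> U" "u \<in> TP f \<eta> x"
  shows "inner u (nabla_Lbar_frame x v a t - Lbar f \<tau> \<eta> \<xi> x (proj (TP f \<eta> x) (nabla_frame x v a t)))
    + inner (proj (Rsp f \<eta> x) (nabla_frame x v a t)) (Lbar f \<tau> \<eta> \<xi> x u) = 0"
proof -
  let ?N = "nabla_Lbar_frame x v a t" and ?\<Lambda> = "nabla_frame x v a t"
  obtain p q where pq: "proj (TP f \<eta> x) ?\<Lambda> = df f x p + q *\<^sub>R \<eta> x"
    using proj_TP_in_TP[OF assms(1)] unfolding TP_def by blast
  then have r: "proj (Rsp f \<eta> x) ?\<Lambda> = ?\<Lambda> - (df f x p + q *\<^sub>R \<eta> x)"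
    using proj_TP_add_proj_R[OF assms(1), of ?\<Lambda>] by (metis add_diff_cancel_left')
  obtain b s where u: "u = df f x b + s *\<^sub>R \<eta> x" using assms(2) unfolding TP_def by blast
  let ?\<pi> = "df f x p + q *\<^sub>R \<eta> x"
  have "inner u (?N - Lbar f \<tau> \<eta> \<xi> x ?\<pi>) + inner (?\<Lambda> - ?\<pi>) (Lbar f \<tau> \<eta> \<xi> x u)
      = (inner (df f x b) (?N - Lbar f \<tau> \<eta> \<xi> x ?\<pi>) + inner (?\<Lambda> - ?\<pi>) (df \<tau> x b))
        + s * (inner (\<eta> x) (?N - Lbar f \<tau> \<eta> \<xi> x ?\<pi>)
          + inner (?\<Lambda> - ?\<pi>) (df f x (Yfld f \<tau> \<eta> x) + \<xi> x))"
    unfolding u Lbar_TP[OF assms(1)] by (simp only: inner_add_left inner_add_right inner_scaleR_left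
        inner_scaleR_right algebra_simps)
  also have "\<dots> = 0"
    using inner_nabla_Lbar_tangent[OF assms(1), of b v a t p q]
      inner_nabla_Lbar_normal[OF assms(1), of v a t p q] inner_R_df[OF proj_R_in_R[OF assms(1), of ?\<Lambda>]]
    unfolding r by simp
  finally show ?thesis unfolding pq r .
qed

lemma TP_section_coordinates:
  assumes lam: "smooth_on U lam" and TP: "\<forall>z\<in>U. lam z \<in> TP f \<eta> z" and x: "x \<in> U"
  obtains V c where "(V has_derivative df V x) (at x)" "(c has_derivative df c x) (at x)"
    "\<And>z. z \<in> U \<Longrightarrow> lam z = df f z (V z) + c z *\<^sub>R \<eta> z"
proof
  define V where "V z = range_coord (df f z) (lam z)" for z
  define c where "c z = inner (lam z) (\<eta> z)" for z
  show "lam z = df f z (V z) + c z *\<^sub>R \<eta> z" if z: "z \<in> U" for z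
  proof -
    obtain a t where at: "lam z = df f z a + t *\<^sub>R \<eta> z" using TP z unfolding TP_def by blast
    moreover have "V z = a"
      unfolding V_def at using z by (intro range_coord_apply[OF linear_df_f inj_df_f]) (simp_all add: inner_add_left)
    moreover have "c z = t" unfolding c_def at using z by (simp add: inner_add_left)
    ultimately show ?thesis by simp
  qed
  have "dd f [b] differentiable (at x)" for b using smooth_f x unfolding smooth_on_def by blast
  then have "(\<lambda>z. df f z b) differentiable (at x)" for b by simp
  moreover have "lam differentiable (at x)" "\<eta> differentiable (at x)"
    using smooth_on_has_derivative[OF lam x] smooth_on_has_derivative[OF smooth_eta x] differentiable_def by blast+
  ultimately have "V differentiable (at x)" "c differentiable (at x)"
    unfolding V_def range_coord_def c_def
    using linear_df_f[OF x] inj_df_f[OF x]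
    by (auto intro!: differentiable_gram_solve[where F = "df f"] differentiable_inner)
  then show "(V has_derivative df V x) (at x)" "(c has_derivative df c x) (at x)"
    unfolding df_def by (simp_all add: frechet_derivative_works)
qed

lemma TP_section_derivatives:
  assumes lam: "smooth_on U lam" "\<forall>z\<in>U. lam z \<in> TP f \<eta> z" and x: "x \<in> U"
  obtains a t s where "s \<in> TP f \<eta> x" "df lam x v = nabla_frame x v a t + s"
    "df (\<lambda>z. Lbar f \<tau> \<eta> \<xi> z (lam z)) x v = nabla_Lbar_frame x v a t + Lbar f \<tau> \<eta> \<xi> x s"
proof -
  obtain V c where dV: "(V has_derivative df V x) (at x)" and dc: "(c has_derivative df c x) (at x)"
    and lam_eq: "\<And>z. z \<in> U \<Longrightarrow> lam z = df f z (V z) + c z *\<^sub>R \<eta> z"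
    using TP_section_coordinates[OF lam x] by blast
  have "(lam has_derivative (\<lambda>h. (dd f [h, V x] x + df f x (df V x h))
      + (c x *\<^sub>R df \<eta> x h + df c x h *\<^sub>R \<eta> x))) (at x)"
    by (rule has_derivative_transform_within_open[OF has_derivative_add[OF
          has_derivative_df_apply[OF smooth_f open_U x dV]
          has_derivative_scaleR[OF dc smooth_on_has_derivative[OF smooth_eta x]]] open_U x])
      (simp add: lam_eq)
  then have "df lam x v = nabla_frame x v (V x) (c x) + (df f x (df V x v) + df c x v *\<^sub>R \<eta> x)"
    unfolding nabla_frame_def by (simp add: df_eqI algebra_simps)
  moreover have "((\<lambda>z. Lbar f \<tau> \<eta> \<xi> z (lam z)) has_derivative (\<lambda>h. (dd \<tau> [h, V x] x + df \<tau> x (df V x h))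
      + (c x *\<^sub>R ((dd f [h, Yfld f \<tau> \<eta> x] x + df f x (df (Yfld f \<tau> \<eta>) x h)) + df \<xi> x h)
        + df c x h *\<^sub>R (df f x (Yfld f \<tau> \<eta> x) + \<xi> x)))) (at x)"
    by (rule has_derivative_transform_within_open[OF has_derivative_add[OF
          has_derivative_df_apply[OF smooth_tau open_U x dV]
          has_derivative_scaleR[OF dc has_derivative_add[OF
            has_derivative_df_apply[OF smooth_f open_U x has_derivative_Yfld[OF x]]
            smooth_on_has_derivative[OF smooth_xi x]]]] open_U x])
      (simp add: lam_eq Lbar_TP)
  then have "df (\<lambda>z. Lbar f \<tau> \<eta> \<xi> z (lam z)) x v = nabla_Lbar_frame x v (V x) (c x)
      + Lbar f \<tau> \<eta> \<xi> x (df f x (df V x v) + df c x v *\<^sub>R \<eta> x)"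
    unfolding nabla_Lbar_frame_def Lbar_TP[OF x] by (simp add: df_eqI algebra_simps)
  moreover have "df f x (df V x v) + df c x v *\<^sub>R \<eta> x \<in> TP f \<eta> x" unfolding TP_def by blast
  ultimately show ?thesis using that by blast
qed

theorem Lbar_derivative_identity:
  assumes lam: "smooth_on U lam" "\<forall>z\<in>U. lam z \<in> TP f \<eta> z" and x: "x \<in> U"
  shows "inner (df f x v + df lam x v) (df \<tau> x v + df (\<lambda>z. Lbar f \<tau> \<eta> \<xi> z (lam z)) x v)
    = inner (proj (Rsp f \<eta> x) (df lam x v))
        (df (\<lambda>z. Lbar f \<tau> \<eta> \<xi> z (lam z)) x v - Lbar f \<tau> \<eta> \<xi> x (proj (TP f \<eta> x) (df lam x v)))"
proof -
  let ?L = "Lbar f \<tau> \<eta> \<xi> x" and ?TP = "proj (TP f \<eta> x)" and ?R = "proj (Rsp f \<eta> x)"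
  let ?dlam = "df lam x v" and ?dW = "df (\<lambda>z. Lbar f \<tau> \<eta> \<xi> z (lam z)) x v"
  obtain a t s where s: "s \<in> TP f \<eta> x" and dlam: "?dlam = nabla_frame x v a t + s"
    and dW: "?dW = nabla_Lbar_frame x v a t + ?L s"
    using TP_section_derivatives[OF lam x] .
  let ?\<Lambda> = "nabla_frame x v a t"
  have "?TP ?\<Lambda> + s \<in> TP f \<eta> x" using proj_TP_in_TP[OF x] s subspace_TP[OF x] subspace_add by blast
  moreover have "?dlam = (?TP ?\<Lambda> + s) + ?R ?\<Lambda>"
    using dlam proj_TP_add_proj_R[OF x, of ?\<Lambda>] by (simp add: algebra_simps)
  ultimately have TP_dlam: "?TP ?dlam = ?TP ?\<Lambda> + s" and R_dlam: "?R ?dlam = ?R ?\<Lambda>"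
    using proj_TP_add_R[OF x] proj_R_add_TP[OF x] proj_R_in_R[OF x] by metis+
  define D where "D = ?dW - ?L (?TP ?dlam)"
  have D: "D = nabla_Lbar_frame x v a t - ?L (?TP ?\<Lambda>)"
    unfolding D_def dW TP_dlam Lbar_add[OF x proj_TP_in_TP[OF x] s] by simp
  define w where "w = df f x v + ?TP ?dlam"
  have w: "w \<in> TP f \<eta> x"
    unfolding w_def using df_in_TP proj_TP_in_TP[OF x] subspace_TP[OF x] subspace_add by blast
  have "?L w = df \<tau> x v + ?L (?TP ?dlam)"
    unfolding w_def Lbar_add[OF x df_in_TP proj_TP_in_TP[OF x]] Lbar_df[OF x] ..
  then have "df \<tau> x v + ?dW = ?L w + D" unfolding D_def by simp
  moreover have "df f x v + ?dlam = w + ?R ?dlam"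
    unfolding w_def using proj_TP_add_proj_R[OF x, of ?dlam] by simp
  moreover have "inner w D + inner (?R ?dlam) (?L w) = 0"
    unfolding D R_dlam by (rule inner_nabla_Lbar_TP[OF x w])
  ultimately show ?thesis
    using inner_Lbar_self[OF x w] unfolding D_def[symmetric]
    by (simp add: inner_add_left inner_add_right algebra_simps)
qed

end

theorem lemma17:
  fixes U :: "(real^'n) set" and f \<tau> \<eta> \<xi> :: "real^'n \<Rightarrow> real^'m"
  assumes p2: "CARD('m) \<ge> CARD('n) + 2"
    and imm: "isometric_immersion U f"
    and bend: "inf_bending U f \<tau>"
    and star: "cond_star U f \<tau> \<eta> \<xi>"
  shows "\<forall>X lam. vector_field U X \<longrightarrow> smooth_on U lam \<longrightarrow> (\<forall>x\<in>U. lam x \<in> TP f \<eta> x) \<longrightarrow>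
     (\<forall>x\<in>U.
        inner (push f X x + nablat X lam x)
              (Lop \<tau> X x + nablat X (\<lambda>z. Lbar f \<tau> \<eta> \<xi> z (lam z)) x)
      = inner (proj (Rsp f \<eta> x) (nablat X lam x))
              (nablat X (\<lambda>z. Lbar f \<tau> \<eta> \<xi> z (lam z)) x
               - Lbar f \<tau> \<eta> \<xi> x (proj (TP f \<eta> x) (nablat X lam x))))"
proof -
  interpret bending_star U f \<tau> \<eta> \<xi> by (rule bending_star.intro[OF imm bend star])
  \<comment> \<open>Only the value \<open>X x\<close> enters, so neither the smoothness of \<open>X\<close> nor \<open>p2\<close> is needed.\<close>
  show ?thesis unfolding push_def nablat_def Lop_def by (blast intro: Lbar_derivative_identity)
qed

end
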